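(* Let $X$ be a set with at least two elements. Then $\mathcal{PI}^{\ast}_X$ and $\overline{\mathcal{PI}^{\ast}}_X$ are fundamental.
   Context: Let $X'=\{x':x\in X\}$ be a disjoint copy of $X$. Let $P_X$ be the set of all partitions of $X\cup X'$ each of whose blocks is either a singleton (a point) or a generalised line (a subset meeting both $X$ and $X'$). Product $\star$: with $X''$ a third copy of $X$, regard $\alpha$ as a partition of $X\cup X''$ and $\beta$ as a partition of $X''\cup X'$, let $\sim$ be the equivalence on $X\cup X''\cup X'$ generated by the blocks of both; $\alpha\star\beta$ is the partition of $X\cup X'$ in which distinct $u,v$ are in one block iff $u\sim v$ and the $\sim$-class of $u$ contains no singleton block of $\alpha$ or $\beta$. Product $\circ$: $\alpha\circ\beta$ has as generalised lines exactly the sets $A\cup D'$ with $A\cup B'$ a generalised line of $\alpha$ and $B\cup D'$ a generalised line of $\beta$ (same $B\subseteq X$), all other elements points. $\mathcal{PI}^{\ast}_X=(P_X,\star)$ and $\overline{\mathcal{PI}^{\ast}}_X=(P_X,\circ)$ are inverse semigroups. An inverse semigroup $S$ is fundamental if the relation $\mu=\{(a,b)\in S\times S: a^{-1}ea=b^{-1}eb \text{ for all idempotents } e\in S\}$ is the identity relation. *)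

theory Defs
  imports "HOL-Library.Disjoint_Sets"
begin

text \<open>Three disjoint copies of X: L x = x (in X), R x = x' (in X'), M x = x'' (in X'').\<close>
datatype 'a cp = L 'a | R 'a | M 'a

definition cset :: "'a set \<Rightarrow> 'a cp set" where
  "cset X = L ` X \<union> R ` X"

definition is_gline :: "'a set \<Rightarrow> 'a cp set \<Rightarrow> bool" where
  "is_gline X B \<longleftrightarrow> B \<inter> L ` X \<noteq> {} \<and> B \<inter> R ` X \<noteq> {}"

definition PX :: "'a set \<Rightarrow> 'a cp set set set" where
  "PX X = {P. partition_on (cset X) P \<and> (\<forall>B\<in>P. is_singleton B \<or> is_gline X B)}"

text \<open>Renamings: alpha regarded on X \<union> X'', beta regarded on X'' \<union> X'.\<close>
fun R_to_M :: "'a cp \<Rightarrow> 'a cp" where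
  "R_to_M (R x) = M x" | "R_to_M u = u"

fun L_to_M :: "'a cp \<Rightarrow> 'a cp" where
  "L_to_M (L x) = M x" | "L_to_M u = u"

definition star_blocks :: "'a cp set set \<Rightarrow> 'a cp set set \<Rightarrow> 'a cp set set" where
  "star_blocks \<alpha> \<beta> = (\<lambda>B. R_to_M ` B) ` \<alpha> \<union> (\<lambda>B. L_to_M ` B) ` \<beta>"

definition star_sim :: "'a cp set set \<Rightarrow> 'a cp set set \<Rightarrow> ('a cp \<times> 'a cp) set" where
  "star_sim \<alpha> \<beta> = {(u, v). \<exists>B\<in>star_blocks \<alpha> \<beta>. u \<in> B \<and> v \<in> B}\<^sup>*"

definition star_good :: "'a cp set set \<Rightarrow> 'a cp set set \<Rightarrow> 'a cp \<Rightarrow> bool" where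
  "star_good \<alpha> \<beta> u \<longleftrightarrow>
     \<not> (\<exists>B\<in>star_blocks \<alpha> \<beta>. is_singleton B \<and> B \<subseteq> star_sim \<alpha> \<beta> `` {u})"

definition star :: "'a set \<Rightarrow> 'a cp set set \<Rightarrow> 'a cp set set \<Rightarrow> 'a cp set set" where
  "star X \<alpha> \<beta> = {B. \<exists>u\<in>cset X. B = {v \<in> cset X. v = u \<or>
        ((u, v) \<in> star_sim \<alpha> \<beta> \<and> star_good \<alpha> \<beta> u)}}"

definition circ_lines :: "'a set \<Rightarrow> 'a cp set set \<Rightarrow> 'a cp set set \<Rightarrow> 'a cp set set" where
  "circ_lines X \<alpha> \<beta> = {L ` A \<union> R ` D | A B D.
      L ` A \<union> R ` B \<in> \<alpha> \<and> is_gline X (L ` A \<union> R ` B) \<and>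
      L ` B \<union> R ` D \<in> \<beta> \<and> is_gline X (L ` B \<union> R ` D)}"

definition circ :: "'a set \<Rightarrow> 'a cp set set \<Rightarrow> 'a cp set set \<Rightarrow> 'a cp set set" where
  "circ X \<alpha> \<beta> = circ_lines X \<alpha> \<beta> \<union> {{u} | u. u \<in> cset X - \<Union>(circ_lines X \<alpha> \<beta>)}"

definition inv_el :: "'s set \<Rightarrow> ('s \<Rightarrow> 's \<Rightarrow> 's) \<Rightarrow> 's \<Rightarrow> 's" where
  "inv_el S m a = (THE b. b \<in> S \<and> m (m a b) a = a \<and> m (m b a) b = b)"

definition mu_rel :: "'s set \<Rightarrow> ('s \<Rightarrow> 's \<Rightarrow> 's) \<Rightarrow> ('s \<times> 's) set" where
  "mu_rel S m = {(a, b). a \<in> S \<and> b \<in> S \<and>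
     (\<forall>e\<in>S. m e e = e \<longrightarrow> m (m (inv_el S m a) e) a = m (m (inv_el S m b) e) b)}"

definition fundamental :: "'s set \<Rightarrow> ('s \<Rightarrow> 's \<Rightarrow> 's) \<Rightarrow> bool" where
  "fundamental S m \<longleftrightarrow> mu_rel S m = Id_on S"

end

theory Submission
  imports Defs
begin

text \<open>In both semigroups the inverse of a partition is its mirror image under \<open>x \<leftrightarrow> x'\<close>;
  uniqueness of the inverse is read off by following the blocks through the product.
  For fundamentality one only needs the idempotents \<open>e\<^sub>A\<close> whose single line is \<open>A \<union> A'\<close>:
  if \<open>A \<union> B'\<close> is a line of \<open>\<alpha>\<close>, then \<open>\<alpha>\<inverse> e\<^sub>A \<alpha>\<close> contains the line \<open>B \<union> B'\<close>.
  If \<open>\<beta>\<inverse> e\<^sub>A \<beta> = \<alpha>\<inverse> e\<^sub>A \<alpha>\<close>, tracing this line back through \<open>\<beta>\<close> shows that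
  the block of \<open>\<beta>\<close> through a point of \<open>B'\<close> is a line contained in \<open>A \<union> B'\<close>; by symmetry it
  equals \<open>A \<union> B'\<close>. So \<open>\<mu>\<close>-related partitions have the same lines, and a partition in P_X
  is determined by its lines.\<close>

section \<open>Generalised lines and the partitions in P_X\<close>

definition lefts :: "'a cp set \<Rightarrow> 'a set" where
  "lefts Z = {x. L x \<in> Z}"

definition rights :: "'a cp set \<Rightarrow> 'a set" where
  "rights Z = {x. R x \<in> Z}"

lemma L_in_cset [simp]: "L x \<in> cset X \<longleftrightarrow> x \<in> X"
  and R_in_cset [simp]: "R x \<in> cset X \<longleftrightarrow> x \<in> X"
  and M_notin_cset [simp]: "M x \<notin> cset X"
  unfolding cset_def by auto

lemma cset_cases:
  assumes "u \<in> cset X"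
  obtains x where "x \<in> X" "u = L x" | x where "x \<in> X" "u = R x"
  using assms unfolding cset_def by auto

lemma lefts_LR [simp]: "lefts (L ` A \<union> R ` B) = A"
  and rights_LR [simp]: "rights (L ` A \<union> R ` B) = B"
  unfolding lefts_def rights_def by auto

lemma LR_eq_iff: "L ` A \<union> R ` B = L ` A' \<union> R ` B' \<longleftrightarrow> A = A' \<and> B = B'"
  by (metis lefts_LR rights_LR)

lemma subset_cset_eq_LR:
  assumes "Z \<subseteq> cset X"
  shows "Z = L ` lefts Z \<union> R ` rights Z" and "lefts Z \<subseteq> X" and "rights Z \<subseteq> X"
  using assms unfolding lefts_def rights_def cset_def by auto

lemma is_gline_iff: "is_gline X Z \<longleftrightarrow> (\<exists>x\<in>X. L x \<in> Z) \<and> (\<exists>y\<in>X. R y \<in> Z)"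
  unfolding is_gline_def by auto

lemma is_gline_LR: "is_gline X (L ` A \<union> R ` B) \<longleftrightarrow> A \<inter> X \<noteq> {} \<and> B \<inter> X \<noteq> {}"
  unfolding is_gline_iff by auto

lemma is_gline_not_singleton: "is_gline X Z \<Longrightarrow> \<not> is_singleton Z"
  unfolding is_gline_iff is_singleton_def by auto

lemma PX_block_subset: "P \<in> PX X \<Longrightarrow> Z \<in> P \<Longrightarrow> Z \<subseteq> cset X"
  unfolding PX_def partition_on_def by auto

lemma PX_block_exists:
  assumes "P \<in> PX X" "u \<in> cset X"
  obtains Z where "Z \<in> P" "u \<in> Z"
  using assms unfolding PX_def partition_on_def by auto

lemma PX_block_unique: "P \<in> PX X \<Longrightarrow> Z \<in> P \<Longrightarrow> Z' \<in> P \<Longrightarrow> u \<in> Z \<Longrightarrow> u \<in> Z' \<Longrightarrow> Z = Z'"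
  unfolding PX_def partition_on_def pairwise_def disjnt_def by blast

lemma PX_block_nonempty: "P \<in> PX X \<Longrightarrow> Z \<in> P \<Longrightarrow> Z \<noteq> {}"
  unfolding PX_def partition_on_def by auto

lemma PX_block_cases: "P \<in> PX X \<Longrightarrow> Z \<in> P \<Longrightarrow> (\<exists>u. Z = {u}) \<or> is_gline X Z"
  unfolding PX_def is_singleton_def by auto

lemma PX_block_is_gline: "P \<in> PX X \<Longrightarrow> Z \<in> P \<Longrightarrow> u \<in> Z \<Longrightarrow> Z \<noteq> {u} \<Longrightarrow> is_gline X Z"
  using PX_block_cases by fastforce

lemma PX_lineE:
  assumes "P \<in> PX X" "Z \<in> P" "is_gline X Z"
  obtains A B where "Z = L ` A \<union> R ` B" "A \<noteq> {}" "B \<noteq> {}" "A \<subseteq> X" "B \<subseteq> X"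
proof -
  have Z: "Z \<subseteq> cset X" using PX_block_subset[OF assms(1,2)] .
  have "lefts Z \<noteq> {}" "rights Z \<noteq> {}"
    using assms(3) unfolding is_gline_iff lefts_def rights_def by auto
  then show ?thesis using that subset_cset_eq_LR[OF Z] by blast
qed

lemma PX_eqI_lines:
  assumes P: "P \<in> PX X" and Q: "Q \<in> PX X"
    and "\<And>Z. Z \<in> P \<Longrightarrow> is_gline X Z \<Longrightarrow> Z \<in> Q"
    and "\<And>Z. Z \<in> Q \<Longrightarrow> is_gline X Z \<Longrightarrow> Z \<in> P"
  shows "P = Q"
proof -
  have point: "Z \<in> Q" if P: "P \<in> PX X" and Q: "Q \<in> PX X"
    and lines: "\<And>Z. Z \<in> Q \<Longrightarrow> is_gline X Z \<Longrightarrow> Z \<in> P"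
    and Z: "Z \<in> P" "Z = {u}" for P Q Z u
  proof -
    have "u \<in> cset X" using PX_block_subset[OF P Z(1)] Z(2) by auto
    then obtain W where W: "W \<in> Q" "u \<in> W" using PX_block_exists[OF Q] by blast
    have "\<not> is_gline X W"
      using lines[OF W(1)] PX_block_unique[OF P _ Z(1), of W u] W Z(2) is_gline_not_singleton
      by fastforce
    then show ?thesis using PX_block_cases[OF Q W(1)] W Z(2) by auto
  qed
  show ?thesis
  proof (intro equalityI subsetI)
    show "Z \<in> Q" if "Z \<in> P" for Z
      using PX_block_cases[OF P that] point[OF P Q assms(4) that] assms(3)[OF that] by blast
    show "Z \<in> P" if "Z \<in> Q" for Z
      using PX_block_cases[OF Q that] point[OF Q P assms(3) that] assms(4)[OF that] by blast
  qed
qed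

lemma lines_points_PX:
  assumes "\<And>Z. Z \<in> Ls \<Longrightarrow> Z \<subseteq> cset X" "\<And>Z. Z \<in> Ls \<Longrightarrow> is_gline X Z"
    and "\<And>Z Z'. Z \<in> Ls \<Longrightarrow> Z' \<in> Ls \<Longrightarrow> Z \<inter> Z' \<noteq> {} \<Longrightarrow> Z = Z'"
  shows "Ls \<union> {{u} | u. u \<in> cset X - \<Union>Ls} \<in> PX X"
proof -
  let ?P = "Ls \<union> {{u} | u. u \<in> cset X - \<Union>Ls}"
  have "\<Union>?P = cset X" using assms(1) by blast
  moreover have "disjoint ?P"
    unfolding pairwise_def disjnt_def using assms(3) by blast
  moreover have "{} \<notin> ?P" using assms(2) unfolding is_gline_def by blast
  ultimately have "partition_on (cset X) ?P" unfolding partition_on_def by blast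
  then show ?thesis unfolding PX_def using assms(2) by auto
qed

text \<open>Products under \<open>\<star>\<close> are only known to be families of this kind, not members of P_X.\<close>

definition disjoint_blocks :: "'a set \<Rightarrow> 'a cp set set \<Rightarrow> bool" where
  "disjoint_blocks X P \<longleftrightarrow>
     (\<forall>Z\<in>P. Z \<subseteq> cset X) \<and> (\<forall>Z\<in>P. \<forall>Z'\<in>P. Z \<inter> Z' \<noteq> {} \<longrightarrow> Z = Z')"

lemma disjoint_blocks_subset: "disjoint_blocks X P \<Longrightarrow> Z \<in> P \<Longrightarrow> Z \<subseteq> cset X"
  unfolding disjoint_blocks_def by blast

lemma disjoint_blocks_unique:
  "disjoint_blocks X P \<Longrightarrow> Z \<in> P \<Longrightarrow> Z' \<in> P \<Longrightarrow> u \<in> Z \<Longrightarrow> u \<in> Z' \<Longrightarrow> Z = Z'"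
  unfolding disjoint_blocks_def by blast

lemma PX_disjoint_blocks: "P \<in> PX X \<Longrightarrow> disjoint_blocks X P"
  unfolding disjoint_blocks_def using PX_block_subset PX_block_unique by blast

section \<open>Transposition\<close>

fun swap :: "'a cp \<Rightarrow> 'a cp" where
  "swap (L x) = R x" | "swap (R x) = L x" | "swap (M x) = M x"

definition transpose_part :: "'a cp set set \<Rightarrow> 'a cp set set" where
  "transpose_part P = (\<lambda>Z. swap ` Z) ` P"

lemma swap_swap [simp]: "swap (swap u) = u"
  by (cases u) auto

lemma mem_swap_image [simp]: "u \<in> swap ` Z \<longleftrightarrow> swap u \<in> Z"
  by (metis image_iff swap_swap)

lemma swap_image_swap_image [simp]: "swap ` swap ` Z = Z"
  by auto

lemma swap_image_LR: "swap ` (L ` A \<union> R ` B) = L ` B \<union> R ` A"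
  by (auto simp: image_Un image_image)

lemma is_gline_swap_image [simp]: "is_gline X (swap ` Z) \<longleftrightarrow> is_gline X Z"
  unfolding is_gline_iff by (metis mem_swap_image swap.simps(1,2))

lemma transpose_part_transpose_part [simp]: "transpose_part (transpose_part P) = P"
  unfolding transpose_part_def image_comp by (simp add: comp_def)

lemma mem_transpose_part: "Z \<in> transpose_part P \<longleftrightarrow> swap ` Z \<in> P"
  unfolding transpose_part_def by (metis image_iff swap_image_swap_image)

lemma transpose_part_PX:
  assumes P: "P \<in> PX X"
  shows "transpose_part P \<in> PX X"
proof -
  have part: "partition_on (cset X) P" and "{} \<notin> P" using P unfolding PX_def partition_on_def by auto
  have "swap ` cset X = cset X"
  proof (rule set_eqI)
    show "u \<in> swap ` cset X \<longleftrightarrow> u \<in> cset X" for u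
      by (cases u) auto
  qed
  moreover have "partition_on (swap ` cset X) ((`) swap ` P - {{}})"
    by (rule partition_on_inj_image[OF part]) (metis inj_on_inverseI swap_swap)
  moreover have "(`) swap ` P - {{}} = (`) swap ` P"
    using \<open>{} \<notin> P\<close> by auto
  ultimately have "partition_on (cset X) (transpose_part P)"
    unfolding transpose_part_def by simp
  moreover have "is_singleton Z \<or> is_gline X Z" if "Z \<in> transpose_part P" for Z
  proof -
    have "swap ` Z \<in> P" using that by (simp add: mem_transpose_part)
    from PX_block_cases[OF P this] show ?thesis
    proof
      assume "\<exists>u. swap ` Z = {u}"
      then obtain u where "swap ` Z = {u}" by blast
      then have "Z = {swap u}" by (metis image_empty image_insert swap_image_swap_image)
      then show ?thesis by simp
    qed simp
  qed
  ultimately show ?thesis unfolding PX_def by auto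
qed

lemma PX_eq_transpose_partI:
  assumes a: "a \<in> PX X" and b: "b \<in> PX X"
    and "\<And>Z. Z \<in> a \<Longrightarrow> is_gline X Z \<Longrightarrow> swap ` Z \<in> b"
    and "\<And>W. W \<in> b \<Longrightarrow> is_gline X W \<Longrightarrow> swap ` W \<in> a"
  shows "b = transpose_part a"
proof (rule PX_eqI_lines[OF b transpose_part_PX[OF a]])
  show "W \<in> transpose_part a" if "W \<in> b" "is_gline X W" for W
    using assms(4)[OF that] by (simp add: mem_transpose_part)
  show "Z \<in> b" if "Z \<in> transpose_part a" "is_gline X Z" for Z
    using assms(3)[of "swap ` Z"] that by (simp add: mem_transpose_part)
qed

section \<open>Fundamentality from an explicit inverse\<close>

lemma inv_el_eqI:
  assumes "a' \<in> S" "m (m a a') a = a" "m (m a' a) a' = a'"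
    and "\<And>b. b \<in> S \<Longrightarrow> m (m a b) a = a \<Longrightarrow> m (m b a) b = b \<Longrightarrow> b = a'"
  shows "inv_el S m a = a'"
  unfolding inv_el_def by (rule the_equality) (use assms in blast)+

lemma fundamentalI:
  assumes inv: "\<And>a. a \<in> S \<Longrightarrow> inv_el S m a = i a"
    and sep: "\<And>a b. a \<in> S \<Longrightarrow> b \<in> S \<Longrightarrow>
      (\<And>e. e \<in> S \<Longrightarrow> m e e = e \<Longrightarrow> m (m (i a) e) a = m (m (i b) e) b) \<Longrightarrow> a = b"
  shows "fundamental S m"
  unfolding fundamental_def
proof (intro equalityI subsetI)
  fix p assume "p \<in> mu_rel S m"
  then obtain a b where "p = (a, b)" "a \<in> S" "b \<in> S"
    and "\<forall>e\<in>S. m e e = e \<longrightarrow> m (m (i a) e) a = m (m (i b) e) b"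
    unfolding mu_rel_def using inv by auto
  then show "p \<in> Id_on S" using sep[of a b] by auto
qed (auto simp: mu_rel_def)

lemma fundamental_PXI:
  assumes inverse: "\<And>a. a \<in> PX X \<Longrightarrow> m (m a (transpose_part a)) a = a"
    and inverse_unique: "\<And>a b Z. a \<in> PX X \<Longrightarrow> b \<in> PX X \<Longrightarrow> m (m a b) a = a \<Longrightarrow>
      m (m b a) b = b \<Longrightarrow> Z \<in> a \<Longrightarrow> is_gline X Z \<Longrightarrow> swap ` Z \<in> b"
    and separating: "\<And>a b Z. a \<in> PX X \<Longrightarrow> b \<in> PX X \<Longrightarrow>
      (\<And>e. e \<in> PX X \<Longrightarrow> m e e = e \<Longrightarrow> m (m (transpose_part a) e) a = m (m (transpose_part b) e) b) \<Longrightarrow>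
      Z \<in> a \<Longrightarrow> is_gline X Z \<Longrightarrow> Z \<in> b"
  shows "fundamental (PX X) m"
proof (rule fundamentalI)
  fix a assume a: "a \<in> PX X"
  show "inv_el (PX X) m a = transpose_part a"
  proof (rule inv_el_eqI)
    show "transpose_part a \<in> PX X" using transpose_part_PX[OF a] .
    show "m (m a (transpose_part a)) a = a" using inverse[OF a] .
    show "m (m (transpose_part a) a) (transpose_part a) = transpose_part a"
      using inverse[OF transpose_part_PX[OF a]] by simp
    fix b assume b: "b \<in> PX X" and eqs: "m (m a b) a = a" "m (m b a) b = b"
    show "b = transpose_part a"
      by (rule PX_eq_transpose_partI[OF a b])
        (use inverse_unique[OF a b eqs] inverse_unique[OF b a eqs(2,1)] in blast)+
  qed
next
  fix a b
  assume a: "a \<in> PX X" and b: "b \<in> PX X"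
    and H: "\<And>e. e \<in> PX X \<Longrightarrow> m e e = e \<Longrightarrow> m (m (transpose_part a) e) a = m (m (transpose_part b) e) b"
  show "a = b"
  proof (rule PX_eqI_lines[OF a b])
    show "Z \<in> b" if "Z \<in> a" "is_gline X Z" for Z
      using separating[OF a b H that] .
    show "Z \<in> a" if "Z \<in> b" "is_gline X Z" for Z
      using separating[OF b a H[symmetric] that] .
  qed
qed

text \<open>\<open>diag_part X A\<close> is the idempotent \<open>e\<^sub>A\<close> of the proof sketch above.\<close>

definition diag_part :: "'a set \<Rightarrow> 'a set \<Rightarrow> 'a cp set set" where
  "diag_part X A = {L ` A \<union> R ` A} \<union> {{u} | u. u \<in> cset X - (L ` A \<union> R ` A)}"

lemma diag_part_PX: "A \<subseteq> X \<Longrightarrow> A \<noteq> {} \<Longrightarrow> diag_part X A \<in> PX X"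
  using lines_points_PX[of "{L ` A \<union> R ` A}" X]
  unfolding diag_part_def by (auto simp: cset_def is_gline_LR)

lemma diag_part_line: "L ` A \<union> R ` A \<in> diag_part X A"
  unfolding diag_part_def by blast

lemma diag_part_point: "u \<in> cset X \<Longrightarrow> u \<notin> L ` A \<union> R ` A \<Longrightarrow> {u} \<in> diag_part X A"
  unfolding diag_part_def by blast

lemma diag_part_line_unique: "Z \<in> diag_part X A \<Longrightarrow> is_gline X Z \<Longrightarrow> Z = L ` A \<union> R ` A"
  unfolding diag_part_def using is_gline_not_singleton by fastforce

section \<open>The product \<open>\<star>\<close>\<close>

lemma star_sim_refl: "(u, u) \<in> star_sim \<alpha> \<beta>"
  unfolding star_sim_def by simp

lemma star_sim_sym: "(u, v) \<in> star_sim \<alpha> \<beta> \<Longrightarrow> (v, u) \<in> star_sim \<alpha> \<beta>"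
proof -
  have "sym {(u, v). \<exists>B\<in>star_blocks \<alpha> \<beta>. u \<in> B \<and> v \<in> B}"
    unfolding sym_def by blast
  then have "sym (star_sim \<alpha> \<beta>)" unfolding star_sim_def by (rule sym_rtrancl)
  then show "(u, v) \<in> star_sim \<alpha> \<beta> \<Longrightarrow> (v, u) \<in> star_sim \<alpha> \<beta>" unfolding sym_def by blast
qed

lemma star_sim_trans: "(u, v) \<in> star_sim \<alpha> \<beta> \<Longrightarrow> (v, w) \<in> star_sim \<alpha> \<beta> \<Longrightarrow> (u, w) \<in> star_sim \<alpha> \<beta>"
  unfolding star_sim_def by (rule rtrancl_trans)

lemma star_sim_block: "B \<in> star_blocks \<alpha> \<beta> \<Longrightarrow> u \<in> B \<Longrightarrow> v \<in> B \<Longrightarrow> (u, v) \<in> star_sim \<alpha> \<beta>"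
  unfolding star_sim_def by blast

lemma star_blocks_left: "Z \<in> \<alpha> \<Longrightarrow> R_to_M ` Z \<in> star_blocks \<alpha> \<beta>"
  and star_blocks_right: "W \<in> \<beta> \<Longrightarrow> L_to_M ` W \<in> star_blocks \<alpha> \<beta>"
  unfolding star_blocks_def by auto

lemma star_blocksE:
  assumes "B \<in> star_blocks \<alpha> \<beta>"
  obtains Z where "Z \<in> \<alpha>" "B = R_to_M ` Z" | W where "W \<in> \<beta>" "B = L_to_M ` W"
  using assms unfolding star_blocks_def by auto

lemma R_to_M_image: "Z \<subseteq> cset X \<Longrightarrow> R_to_M ` Z = L ` lefts Z \<union> M ` rights Z"
  and L_to_M_image: "Z \<subseteq> cset X \<Longrightarrow> L_to_M ` Z = M ` lefts Z \<union> R ` rights Z"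
  by (subst (1) subset_cset_eq_LR(1), assumption, force simp: image_Un image_image)+

lemma star_sim_left: "Z \<in> \<alpha> \<Longrightarrow> v \<in> Z \<Longrightarrow> v' \<in> Z \<Longrightarrow> (R_to_M v, R_to_M v') \<in> star_sim \<alpha> \<beta>"
  by (rule star_sim_block[OF star_blocks_left]) auto

lemma star_sim_right: "W \<in> \<beta> \<Longrightarrow> v \<in> W \<Longrightarrow> v' \<in> W \<Longrightarrow> (L_to_M v, L_to_M v') \<in> star_sim \<alpha> \<beta>"
  by (rule star_sim_block[OF star_blocks_right]) auto

lemma star_good_cong: "(u, v) \<in> star_sim \<alpha> \<beta> \<Longrightarrow> star_good \<alpha> \<beta> u = star_good \<alpha> \<beta> v"
proof -
  assume uv: "(u, v) \<in> star_sim \<alpha> \<beta>"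
  have "star_sim \<alpha> \<beta> `` {u} = star_sim \<alpha> \<beta> `` {v}"
    using star_sim_trans[OF uv] star_sim_trans[OF star_sim_sym[OF uv]] by blast
  then show ?thesis unfolding star_good_def by simp
qed

lemma star_good_not_point: "star_good \<alpha> \<beta> u \<Longrightarrow> (u, w) \<in> star_sim \<alpha> \<beta> \<Longrightarrow> {w} \<notin> star_blocks \<alpha> \<beta>"
  unfolding star_good_def by auto

definition star_block :: "'a set \<Rightarrow> 'a cp set set \<Rightarrow> 'a cp set set \<Rightarrow> 'a cp \<Rightarrow> 'a cp set" where
  "star_block X \<alpha> \<beta> u = {v \<in> cset X. v = u \<or> ((u, v) \<in> star_sim \<alpha> \<beta> \<and> star_good \<alpha> \<beta> u)}"

lemma star_eq_image: "star X \<alpha> \<beta> = star_block X \<alpha> \<beta> ` cset X"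
  unfolding star_def star_block_def by auto

lemma star_block_in_star: "u \<in> cset X \<Longrightarrow> star_block X \<alpha> \<beta> u \<in> star X \<alpha> \<beta>"
  unfolding star_eq_image by blast

lemma star_block_self: "u \<in> cset X \<Longrightarrow> u \<in> star_block X \<alpha> \<beta> u"
  and star_block_subset: "star_block X \<alpha> \<beta> u \<subseteq> cset X"
  unfolding star_block_def by auto

lemma star_block_not_good: "\<not> star_good \<alpha> \<beta> u \<Longrightarrow> u \<in> cset X \<Longrightarrow> star_block X \<alpha> \<beta> u = {u}"
  and star_block_good: "star_good \<alpha> \<beta> u \<Longrightarrow> star_block X \<alpha> \<beta> u = {v \<in> cset X. (u, v) \<in> star_sim \<alpha> \<beta>}"
  unfolding star_block_def using star_sim_refl by auto

lemma star_block_eq: "v \<in> star_block X \<alpha> \<beta> u \<Longrightarrow> star_block X \<alpha> \<beta> v = star_block X \<alpha> \<beta> u"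
proof (cases "star_good \<alpha> \<beta> u")
  case True
  assume "v \<in> star_block X \<alpha> \<beta> u"
  then have uv: "(u, v) \<in> star_sim \<alpha> \<beta>" using star_block_good[OF True] by blast
  have "star_block X \<alpha> \<beta> v = {w \<in> cset X. (v, w) \<in> star_sim \<alpha> \<beta>}"
    using True star_good_cong[OF uv] by (simp add: star_block_good)
  also have "\<dots> = star_block X \<alpha> \<beta> u"
    using star_sim_trans[OF uv] star_sim_trans[OF star_sim_sym[OF uv]] True
    by (auto simp: star_block_good)
  finally show ?thesis .
qed (auto simp: star_block_def)

lemma mem_star_eq_block: "G \<in> star X \<alpha> \<beta> \<Longrightarrow> u \<in> G \<Longrightarrow> G = star_block X \<alpha> \<beta> u"
  unfolding star_eq_image using star_block_eq by blast

lemma star_line_block: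
  assumes "Z \<in> star X \<alpha> \<beta>" "u \<in> Z" "Z \<noteq> {u}"
  shows "star_good \<alpha> \<beta> u" and "Z = {v \<in> cset X. (u, v) \<in> star_sim \<alpha> \<beta>}"
proof -
  have Z: "Z = star_block X \<alpha> \<beta> u" using mem_star_eq_block[OF assms(1,2)] .
  then have "u \<in> cset X" using assms(2) star_block_subset by blast
  then show good: "star_good \<alpha> \<beta> u" using star_block_not_good assms(3) Z by metis
  show "Z = {v \<in> cset X. (u, v) \<in> star_sim \<alpha> \<beta>}" using star_block_good[OF good] Z by simp
qed

lemma star_block_L_point: "{L x} \<in> \<alpha> \<Longrightarrow> x \<in> X \<Longrightarrow> star_block X \<alpha> \<beta> (L x) = {L x}"
  using star_blocks_left[of "{L x}" \<alpha> \<beta>] star_good_not_point[OF _ star_sim_refl]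
  by (intro star_block_not_good) auto

lemma star_block_R_point: "{R x} \<in> \<beta> \<Longrightarrow> x \<in> X \<Longrightarrow> star_block X \<alpha> \<beta> (R x) = {R x}"
  using star_blocks_right[of "{R x}" \<beta> \<alpha>] star_good_not_point[OF _ star_sim_refl]
  by (intro star_block_not_good) auto

lemma star_disjoint_blocks: "disjoint_blocks X (star X \<alpha> \<beta>)"
  unfolding disjoint_blocks_def
proof (intro conjI ballI impI)
  show "Z \<subseteq> cset X" if "Z \<in> star X \<alpha> \<beta>" for Z
    using that star_block_subset unfolding star_eq_image by blast
  show "Z = Z'" if "Z \<in> star X \<alpha> \<beta>" "Z' \<in> star X \<alpha> \<beta>" "Z \<inter> Z' \<noteq> {}" for Z Z'
    using that mem_star_eq_block by blast
qed

lemma star_eqI: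
  assumes P: "P \<in> PX X" and blocks: "\<And>u Q. Q \<in> P \<Longrightarrow> u \<in> Q \<Longrightarrow> star_block X \<alpha> \<beta> u = Q"
  shows "star X \<alpha> \<beta> = P"
proof (intro equalityI subsetI)
  fix G assume "G \<in> star X \<alpha> \<beta>"
  then obtain u where u: "u \<in> cset X" "G = star_block X \<alpha> \<beta> u" unfolding star_eq_image by blast
  then obtain Q where "Q \<in> P" "u \<in> Q" using PX_block_exists[OF P] by blast
  then show "G \<in> P" using blocks u(2) by simp
next
  fix Q assume Q: "Q \<in> P"
  then obtain u where "u \<in> Q" using PX_block_nonempty[OF P] by blast
  then show "Q \<in> star X \<alpha> \<beta>"
    using blocks[OF Q] star_block_in_star PX_block_subset[OF P Q] by blast
qed

lemma lefts_swap_image [simp]: "lefts (swap ` Z) = rights Z"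
  and rights_swap_image [simp]: "rights (swap ` Z) = lefts Z"
  unfolding lefts_def rights_def by (metis mem_swap_image swap.simps(1,2))+

lemma disjoint_blocks_unique_lefts:
  "disjoint_blocks X P \<Longrightarrow> Z \<in> P \<Longrightarrow> Z' \<in> P \<Longrightarrow> t \<in> lefts Z \<Longrightarrow> t \<in> lefts Z' \<Longrightarrow> Z = Z'"
  and disjoint_blocks_unique_rights:
  "disjoint_blocks X P \<Longrightarrow> Z \<in> P \<Longrightarrow> Z' \<in> P \<Longrightarrow> t \<in> rights Z \<Longrightarrow> t \<in> rights Z' \<Longrightarrow> Z = Z'"
  unfolding lefts_def rights_def using disjoint_blocks_unique by blast+

lemma star_sim_closed:
  assumes "\<And>B w. B \<in> star_blocks \<alpha> \<beta> \<Longrightarrow> w \<in> B \<Longrightarrow> w \<in> S \<Longrightarrow> B \<subseteq> S"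
    and "u \<in> S" "(u, v) \<in> star_sim \<alpha> \<beta>"
  shows "v \<in> S"
  using assms(3) unfolding star_sim_def
proof (induction rule: rtrancl_induct)
  case (step v w)
  then show ?case using assms(1) by blast
qed (rule assms(2))

text \<open>A block of \<open>\<alpha>\<close> and a block of \<open>\<beta>\<close> that agree on the middle copy glue to a
  single block of the product, and no other block of \<open>\<alpha>\<close> or \<open>\<beta>\<close> touches them.\<close>

lemma star_blocks_meeting_matched:
  assumes \<alpha>: "disjoint_blocks X \<alpha>" and \<beta>: "disjoint_blocks X \<beta>" and Z: "Z \<in> \<alpha>" and W: "W \<in> \<beta>"
    and match: "rights Z = lefts W"
    and B: "B \<in> star_blocks \<alpha> \<beta>" and w: "w \<in> B" "w \<in> R_to_M ` Z \<union> L_to_M ` W"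
  shows "B = R_to_M ` Z \<or> B = L_to_M ` W"
proof -
  have S: "R_to_M ` Z \<union> L_to_M ` W = L ` lefts Z \<union> M ` rights Z \<union> R ` rights W"
    using R_to_M_image[OF disjoint_blocks_subset[OF \<alpha> Z]]
      L_to_M_image[OF disjoint_blocks_subset[OF \<beta> W]] match by auto
  from B show ?thesis
  proof (cases rule: star_blocksE)
    case (1 Z')
    then have "w \<in> L ` lefts Z' \<union> M ` rights Z'"
      using w(1) R_to_M_image[OF disjoint_blocks_subset[OF \<alpha>]] by blast
    then have "Z' = Z"
      using w(2) disjoint_blocks_unique_lefts[OF \<alpha> 1(1) Z] disjoint_blocks_unique_rights[OF \<alpha> 1(1) Z]
      unfolding S by auto
    then show ?thesis using 1 by blast
  next
    case (2 W')
    then have "w \<in> M ` lefts W' \<union> R ` rights W'"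
      using w(1) L_to_M_image[OF disjoint_blocks_subset[OF \<beta>]] by blast
    then have "W' = W"
      using w(2) disjoint_blocks_unique_lefts[OF \<beta> 2(1) W] disjoint_blocks_unique_rights[OF \<beta> 2(1) W]
      unfolding S match by auto
    then show ?thesis using 2 by blast
  qed
qed

lemma star_block_matched:
  assumes \<alpha>: "disjoint_blocks X \<alpha>" and \<beta>: "disjoint_blocks X \<beta>" and Z: "Z \<in> \<alpha>" and W: "W \<in> \<beta>"
    and match: "rights Z = lefts W"
    and ne: "lefts Z \<noteq> {}" "rights Z \<noteq> {}" "rights W \<noteq> {}"
    and u: "u \<in> L ` lefts Z \<union> R ` rights W"
  shows "star_block X \<alpha> \<beta> u = L ` lefts Z \<union> R ` rights W"
proof -
  let ?S = "R_to_M ` Z \<union> L_to_M ` W"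
  have ZS: "R_to_M ` Z = L ` lefts Z \<union> M ` rights Z"
    using R_to_M_image[OF disjoint_blocks_subset[OF \<alpha> Z]] .
  have WS: "L_to_M ` W = M ` rights Z \<union> R ` rights W"
    using L_to_M_image[OF disjoint_blocks_subset[OF \<beta> W]] match by simp
  obtain x y z where xyz: "x \<in> lefts Z" "y \<in> rights Z" "z \<in> rights W" using ne by blast
  have meeting: "B = R_to_M ` Z \<or> B = L_to_M ` W" if "B \<in> star_blocks \<alpha> \<beta>" "w \<in> B" "w \<in> ?S" for B w
    using star_blocks_meeting_matched[OF \<alpha> \<beta> Z W match that] .
  have to_middle: "(w, M y) \<in> star_sim \<alpha> \<beta>" if "w \<in> ?S" for w
    using that star_sim_block[OF star_blocks_left[OF Z], of w "M y"]
      star_sim_block[OF star_blocks_right[OF W], of w "M y"] xyz(2) ZS WS by blast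
  have uS: "u \<in> ?S" using u ZS WS by blast
  have in_class: "(u, v) \<in> star_sim \<alpha> \<beta> \<longleftrightarrow> v \<in> ?S" for v
  proof
    show "v \<in> ?S" if "(u, v) \<in> star_sim \<alpha> \<beta>"
      by (rule star_sim_closed[OF _ uS that]) (use meeting in blast)
    show "(u, v) \<in> star_sim \<alpha> \<beta>" if "v \<in> ?S"
      using star_sim_trans[OF to_middle[OF uS] star_sim_sym[OF to_middle[OF that]]] .
  qed
  have "L x \<in> R_to_M ` Z" "M y \<in> R_to_M ` Z" "M y \<in> L_to_M ` W" "R z \<in> L_to_M ` W"
    using xyz unfolding ZS WS by auto
  then have not_point: "R_to_M ` Z \<noteq> {w}" "L_to_M ` W \<noteq> {w}" for w
    by (metis cp.distinct singletonD)+
  have "star_good \<alpha> \<beta> u"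
    unfolding star_good_def
  proof
    assume "\<exists>B\<in>star_blocks \<alpha> \<beta>. is_singleton B \<and> B \<subseteq> star_sim \<alpha> \<beta> `` {u}"
    then obtain B w where "B \<in> star_blocks \<alpha> \<beta>" "B = {w}" "(u, w) \<in> star_sim \<alpha> \<beta>"
      by (auto simp: is_singleton_def)
    then show False using meeting[of B w] in_class[of w] not_point[of w] by blast
  qed
  moreover have "lefts Z \<subseteq> X" "rights W \<subseteq> X"
    using subset_cset_eq_LR(2)[OF disjoint_blocks_subset[OF \<alpha> Z]]
      subset_cset_eq_LR(3)[OF disjoint_blocks_subset[OF \<beta> W]] by simp_all
  ultimately show ?thesis using in_class ZS WS by (auto simp: star_block_good)
qed

lemma star_good_left_line:
  assumes "\<alpha> \<in> PX X" "star_good \<alpha> \<beta> u" "U \<in> \<alpha>" "v \<in> U" "(u, R_to_M v) \<in> star_sim \<alpha> \<beta>"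
  shows "is_gline X U"
proof (rule PX_block_is_gline[OF assms(1,3,4)])
  show "U \<noteq> {v}"
    using star_blocks_left[OF assms(3), of \<beta>] star_good_not_point[OF assms(2,5)] by auto
qed

lemma star_good_right_line:
  assumes "\<beta> \<in> PX X" "star_good \<alpha> \<beta> u" "W \<in> \<beta>" "v \<in> W" "(u, L_to_M v) \<in> star_sim \<alpha> \<beta>"
  shows "is_gline X W"
proof (rule PX_block_is_gline[OF assms(1,3,4)])
  show "W \<noteq> {v}"
    using star_blocks_right[OF assms(3), of \<alpha>] star_good_not_point[OF assms(2,5)] by auto
qed

text \<open>If \<open>L x\<close> lies in a line of \<open>(\<alpha> \<star> \<beta>) \<star> \<gamma>\<close>, then the \<open>\<alpha> \<star> \<beta>\<close>-block of \<open>L x\<close>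
  is a line as well, and it lies inside the outer line.\<close>

lemma star_good_inner:
  assumes good: "star_good (star X \<alpha> \<beta>) \<gamma> (L x)" and x: "x \<in> X"
  shows "star_good \<alpha> \<beta> (L x)"
    and "v \<in> cset X \<Longrightarrow> (L x, v) \<in> star_sim \<alpha> \<beta> \<Longrightarrow> (L x, R_to_M v) \<in> star_sim (star X \<alpha> \<beta>) \<gamma>"
proof -
  let ?G = "star_block X \<alpha> \<beta> (L x)"
  have "L x \<in> cset X" using x by simp
  then have G: "?G \<in> star X \<alpha> \<beta>" and LG: "L x \<in> ?G"
    by (rule star_block_in_star, rule star_block_self)
  have "?G \<noteq> {L x}"
  proof
    assume "?G = {L x}"
    then have "{L x} \<in> star_blocks (star X \<alpha> \<beta>) \<gamma>" using star_blocks_left[OF G, of \<gamma>] by simp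
    with star_good_not_point[OF good star_sim_refl] show False by contradiction
  qed
  then show inner: "star_good \<alpha> \<beta> (L x)"
    using star_block_not_good[of \<alpha> \<beta> "L x" X] x by (metis L_in_cset)
  assume "v \<in> cset X" "(L x, v) \<in> star_sim \<alpha> \<beta>"
  then have "v \<in> ?G" using star_block_good[OF inner] by blast
  then show "(L x, R_to_M v) \<in> star_sim (star X \<alpha> \<beta>) \<gamma>"
    using star_sim_left[OF G LG] by simp
qed


lemma star_transpose_inverse:
  assumes a: "a \<in> PX X"
  shows "star X (star X a (transpose_part a)) a = a"
proof (rule star_eqI[OF a])
  fix u Q assume Q: "Q \<in> a" "u \<in> Q"
  have da: "disjoint_blocks X a" and dt: "disjoint_blocks X (transpose_part a)"
    using PX_disjoint_blocks[OF a] PX_disjoint_blocks[OF transpose_part_PX[OF a]] .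
  have Qc: "Q \<subseteq> cset X" using PX_block_subset[OF a Q(1)] .
  from PX_block_cases[OF a Q(1)] show "star_block X (star X a (transpose_part a)) a u = Q"
  proof
    assume "\<exists>v. Q = {v}"
    then have Qu: "Q = {u}" using Q(2) by auto
    have "u \<in> cset X" using Qc Q(2) by blast
    then show ?thesis
    proof (cases rule: cset_cases)
      case (1 x)
      then have "{L x} \<in> a" using Q(1) Qu by simp
      then have "star_block X a (transpose_part a) (L x) = {L x}"
        using star_block_L_point 1(1) by metis
      then have "{L x} \<in> star X a (transpose_part a)"
        using star_block_in_star[of "L x" X a "transpose_part a"] 1(1) by (metis L_in_cset)
      then show ?thesis using star_block_L_point[OF _ 1(1)] Qu 1(2) by simp
    next
      case (2 x)
      then have "{R x} \<in> a" using Q(1) Qu by simp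
      then show ?thesis using star_block_R_point[OF _ 2(1)] Qu 2(2) by simp
    qed
  next
    assume "is_gline X Q"
    then have ne: "lefts Q \<noteq> {}" "rights Q \<noteq> {}" unfolding is_gline_iff lefts_def rights_def by auto
    obtain x where x: "x \<in> lefts Q" using ne by blast
    have swQ: "swap ` Q \<in> transpose_part a" using Q(1) by (simp add: mem_transpose_part)
    let ?G = "star_block X a (transpose_part a) (L x)"
    have G: "?G = L ` lefts Q \<union> R ` lefts Q"
      using star_block_matched[OF da dt Q(1) swQ] ne x by simp
    have "L x \<in> cset X" using x Qc unfolding lefts_def by blast
    then have "?G \<in> star X a (transpose_part a)" by (rule star_block_in_star)
    moreover have "u \<in> L ` lefts ?G \<union> R ` rights Q"
      using Q(2) subset_cset_eq_LR(1)[OF Qc] unfolding G by simp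
    ultimately have "star_block X (star X a (transpose_part a)) a u = L ` lefts ?G \<union> R ` rights Q"
      using star_block_matched[OF star_disjoint_blocks da _ Q(1)] ne unfolding G by simp
    then show ?thesis using subset_cset_eq_LR(1)[OF Qc] unfolding G by simp
  qed
qed

lemma star_inverse_block_bound:
  assumes a: "a \<in> PX X" and b: "b \<in> PX X" and eq: "star X (star X a b) a = a"
    and Z: "Z \<in> a" "L x \<in> Z" "R y \<in> Z" and W: "W \<in> b" "L y \<in> W"
  shows "is_gline X W" and "lefts W \<subseteq> rights Z" and "rights W \<subseteq> lefts Z"
proof -
  let ?c = "star X a b"
  have x: "x \<in> X" using PX_block_subset[OF a Z(1)] Z(2) by auto
  have "Z \<in> star X ?c a" using Z(1) eq by simp
  moreover have "Z \<noteq> {L x}" using Z(3) by auto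
  ultimately have good: "star_good ?c a (L x)"
    and in_Z: "\<And>v. v \<in> cset X \<Longrightarrow> (L x, v) \<in> star_sim ?c a \<Longrightarrow> v \<in> Z"
    using star_line_block[of Z X ?c a "L x"] Z(2) by auto
  note inner = star_good_inner[OF good x]
  have to_y: "(L x, M y) \<in> star_sim a b" using star_sim_left[OF Z(1) Z(2,3)] by simp
  have via_W: "(L x, L_to_M v) \<in> star_sim a b" if "v \<in> W" for v
    using star_sim_trans[OF to_y star_sim_right[OF W that, simplified]] .
  show "is_gline X W" using star_good_right_line[OF b inner(1) W via_W[OF W(2)]] .
  show "rights W \<subseteq> lefts Z"
  proof
    fix w assume "w \<in> rights W"
    then have rw: "R w \<in> W" and w: "w \<in> X"
      using PX_block_subset[OF b W(1)] unfolding rights_def by auto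
    have mw: "(L x, M w) \<in> star_sim ?c a" using inner(2)[of "R w"] via_W[OF rw] w by simp
    obtain V where V: "V \<in> a" "L w \<in> V" using PX_block_exists[OF a, of "L w"] w by auto
    then have "is_gline X V" using star_good_right_line[OF a good V] mw by simp
    then obtain z where rz: "R z \<in> V" "z \<in> X" unfolding is_gline_iff by blast
    have "(L x, R z) \<in> star_sim ?c a"
      using star_sim_trans[OF mw star_sim_right[OF V rz(1), simplified]] .
    then have "V = Z" using PX_block_unique[OF a V(1) Z(1) rz(1)] in_Z rz(2) by simp
    then show "w \<in> lefts Z" using V(2) unfolding lefts_def by simp
  qed
  show "lefts W \<subseteq> rights Z"
  proof
    fix y' assume "y' \<in> lefts W"
    then have ly: "L y' \<in> W" and y': "y' \<in> X"
      using PX_block_subset[OF b W(1)] unfolding lefts_def by auto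
    have my: "(L x, M y') \<in> star_sim a b" using via_W[OF ly] by simp
    obtain U where U: "U \<in> a" "R y' \<in> U" using PX_block_exists[OF a, of "R y'"] y' by auto
    then have "is_gline X U" using star_good_left_line[OF a inner(1) U] my by simp
    then obtain x' where lx: "L x' \<in> U" "x' \<in> X" unfolding is_gline_iff by blast
    have "(L x, L x') \<in> star_sim a b"
      using star_sim_trans[OF my star_sim_left[OF U lx(1), simplified]] .
    then have "(L x, L x') \<in> star_sim ?c a" using inner(2)[of "L x'"] lx(2) by simp
    then have "U = Z" using PX_block_unique[OF a U(1) Z(1) lx(1)] in_Z lx(2) by simp
    then show "y' \<in> rights Z" using U(2) unfolding rights_def by simp
  qed
qed

lemma star_inverse_unique_line:
  assumes a: "a \<in> PX X" and b: "b \<in> PX X"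
    and eq1: "star X (star X a b) a = a" and eq2: "star X (star X b a) b = b"
    and Z: "Z \<in> a" and gl: "is_gline X Z"
  shows "swap ` Z \<in> b"
proof -
  obtain x y where xy: "L x \<in> Z" "R y \<in> Z" "y \<in> X" using gl unfolding is_gline_iff by blast
  obtain W where W: "W \<in> b" "L y \<in> W" using PX_block_exists[OF b, of "L y"] xy(3) by auto
  note bound = star_inverse_block_bound[OF a b eq1 Z xy(1,2) W]
  obtain w where rw: "R w \<in> W" using bound(1) unfolding is_gline_iff by blast
  then have "L w \<in> Z" using bound(3) unfolding lefts_def rights_def by blast
  note bound' = star_inverse_block_bound[OF b a eq2 W rw Z this]
  have "lefts W = rights Z" "rights W = lefts Z"
    using bound(2,3) bound'(2,3) by auto
  then have "W = swap ` Z"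
    using subset_cset_eq_LR(1)[OF PX_block_subset[OF b W(1)]]
      subset_cset_eq_LR(1)[OF PX_block_subset[OF a Z]] swap_image_LR by metis
  then show ?thesis using W(1) by simp
qed

lemma star_diag_part_idem:
  assumes A: "A \<subseteq> X" "A \<noteq> {}"
  shows "star X (diag_part X A) (diag_part X A) = diag_part X A"
proof (rule star_eqI[OF diag_part_PX[OF A]])
  fix u Q assume Q: "Q \<in> diag_part X A" "u \<in> Q"
  have d: "disjoint_blocks X (diag_part X A)" using PX_disjoint_blocks[OF diag_part_PX[OF A]] .
  show "star_block X (diag_part X A) (diag_part X A) u = Q"
  proof (cases "u \<in> L ` A \<union> R ` A")
    case True
    then have "Q = L ` A \<union> R ` A" using disjoint_blocks_unique[OF d Q(1) diag_part_line Q(2)] by simp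
    then show ?thesis using star_block_matched[OF d d diag_part_line diag_part_line] A True by simp
  next
    case False
    have uc: "u \<in> cset X" using disjoint_blocks_subset[OF d Q(1)] Q(2) by blast
    have pt: "{u} \<in> diag_part X A" using diag_part_point[OF uc False] .
    then have Qu: "Q = {u}" using disjoint_blocks_unique[OF d Q(1) pt Q(2)] by simp
    from uc show ?thesis
    proof (cases rule: cset_cases)
      case (1 x)
      then show ?thesis using star_block_L_point[OF _ 1(1)] pt Qu by simp
    next
      case (2 x)
      then show ?thesis using star_block_R_point[OF _ 2(1)] pt Qu by simp
    qed
  qed
qed

lemma star_conj_diag_part_block:
  assumes a: "a \<in> PX X" and Z: "Z \<in> a" "is_gline X Z" and y: "y \<in> rights Z"
  shows "star_block X (star X (transpose_part a) (diag_part X (lefts Z))) a (L y)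
    = L ` rights Z \<union> R ` rights Z"
proof -
  let ?e = "diag_part X (lefts Z)"
  have Zc: "Z \<subseteq> cset X" using PX_block_subset[OF a Z(1)] .
  have ne: "lefts Z \<noteq> {}" "rights Z \<noteq> {}"
    using Z(2) unfolding is_gline_iff lefts_def rights_def by auto
  have da: "disjoint_blocks X a" and dt: "disjoint_blocks X (transpose_part a)"
    and de: "disjoint_blocks X ?e"
    using PX_disjoint_blocks[OF a] PX_disjoint_blocks[OF transpose_part_PX[OF a]]
      PX_disjoint_blocks[OF diag_part_PX[OF subset_cset_eq_LR(2)[OF Zc] ne(1)]] .
  have swZ: "swap ` Z \<in> transpose_part a" using Z(1) by (simp add: mem_transpose_part)
  let ?G = "star_block X (transpose_part a) ?e (L y)"
  have G: "?G = L ` rights Z \<union> R ` lefts Z"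
    using star_block_matched[OF dt de swZ diag_part_line] ne y by simp
  have "L y \<in> cset X" using y Zc unfolding rights_def by auto
  then have "?G \<in> star X (transpose_part a) ?e" by (rule star_block_in_star)
  then show ?thesis
    using star_block_matched[OF star_disjoint_blocks da _ Z(1)] ne y unfolding G by simp
qed

lemma star_block_eq_if_star_eq:
  assumes "star X \<alpha> \<beta> = star X \<alpha>' \<beta>'" "u \<in> cset X"
  shows "star_block X \<alpha> \<beta> u = star_block X \<alpha>' \<beta>' u"
proof -
  have "star_block X \<alpha> \<beta> u \<in> star X \<alpha>' \<beta>'"
    unfolding assms(1)[symmetric] by (rule star_block_in_star[OF assms(2)])
  then show ?thesis by (rule mem_star_eq_block) (rule star_block_self[OF assms(2)])
qed

lemma star_conj_diag_part_bound:
  assumes b: "b \<in> PX X" and A: "A \<subseteq> X" "A \<noteq> {}" and y: "y \<in> X" "y \<in> B"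
    and blk: "star_block X (star X (transpose_part b) (diag_part X A)) b (L y) = L ` B \<union> R ` B"
    and V: "V \<in> b" "R y \<in> V"
  shows "is_gline X V" and "V \<subseteq> L ` A \<union> R ` B"
proof -
  let ?e = "diag_part X A" and ?c = "star X (transpose_part b) (diag_part X A)"
  have e: "?e \<in> PX X" using diag_part_PX[OF A] .
  have bt: "transpose_part b \<in> PX X" using transpose_part_PX[OF b] .
  have Vc: "V \<subseteq> cset X" using PX_block_subset[OF b V(1)] .
  have "L y \<in> cset X" using y by simp
  then have "L ` B \<union> R ` B \<in> star X ?c b" using star_block_in_star[of "L y" X ?c b] blk by simp
  moreover have "L ` B \<union> R ` B \<noteq> {L y}" using y(2) by auto
  ultimately have good: "star_good ?c b (L y)"
    and in_B: "\<And>v. v \<in> cset X \<Longrightarrow> (L y, v) \<in> star_sim ?c b \<Longrightarrow> v \<in> L ` B \<union> R ` B"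
    using star_line_block[of "L ` B \<union> R ` B" X ?c b "L y"] y(2) by auto
  note inner = star_good_inner[OF good y(1)]
  have swV: "swap ` V \<in> transpose_part b" "L y \<in> swap ` V" using V by (simp_all add: mem_transpose_part)
  have via_V: "(L y, M w) \<in> star_sim (transpose_part b) ?e" if "L w \<in> V" for w
    using star_sim_left[OF swV, of "R w"] that by simp
  have "is_gline X (swap ` V)"
    using star_good_left_line[OF bt inner(1) swV] by (simp add: star_sim_refl)
  then show line: "is_gline X V" by simp
  have lefts_A: "w \<in> A" if lw: "L w \<in> V" for w
  proof (rule ccontr)
    assume "w \<notin> A"
    moreover have "w \<in> X" using Vc lw by auto
    ultimately have "{L w} \<in> ?e" using diag_part_point[of "L w" X A] by auto
    then have "is_gline X {L w}" using star_good_right_line[OF e inner(1)] via_V[OF lw] by simp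
    then show False using is_gline_not_singleton by auto
  qed
  obtain w where lw: "L w \<in> V" using line unfolding is_gline_iff by blast
  have wA: "L w \<in> L ` A \<union> R ` A" "R w \<in> L ` A \<union> R ` A" using lefts_A[OF lw] by auto
  have "(M w, R w) \<in> star_sim (transpose_part b) ?e"
    using star_sim_right[OF diag_part_line wA] by simp
  then have "(L y, R w) \<in> star_sim (transpose_part b) ?e" using star_sim_trans via_V[OF lw] by blast
  then have mw: "(L y, M w) \<in> star_sim ?c b" using inner(2)[of "R w"] Vc lw by auto
  have rights_B: "z \<in> B" if rz: "R z \<in> V" for z
  proof -
    have "(L y, R z) \<in> star_sim ?c b" using star_sim_trans[OF mw star_sim_right[OF V(1) lw rz, simplified]] .
    then show ?thesis using in_B[of "R z"] Vc rz by auto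
  qed
  show "V \<subseteq> L ` A \<union> R ` B"
  proof
    fix v assume "v \<in> V"
    then show "v \<in> L ` A \<union> R ` B" using lefts_A rights_B Vc by (cases v) auto
  qed
qed

lemma star_separating_block_subset:
  assumes a: "a \<in> PX X" and b: "b \<in> PX X"
    and H: "\<And>e. e \<in> PX X \<Longrightarrow> star X e e = e \<Longrightarrow>
      star X (star X (transpose_part a) e) a = star X (star X (transpose_part b) e) b"
    and Z: "Z \<in> a" "is_gline X Z" "R y \<in> Z" and V: "V \<in> b" "R y \<in> V"
  shows "is_gline X V \<and> V \<subseteq> Z"
proof -
  have Zc: "Z \<subseteq> cset X" using PX_block_subset[OF a Z(1)] .
  have A: "lefts Z \<subseteq> X" "lefts Z \<noteq> {}"
    using subset_cset_eq_LR(2)[OF Zc] Z(2) unfolding is_gline_iff lefts_def by auto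
  have y: "y \<in> X" "y \<in> rights Z" using Zc Z(3) unfolding rights_def by auto
  have "star_block X (star X (transpose_part b) (diag_part X (lefts Z))) b (L y)
      = L ` rights Z \<union> R ` rights Z"
    using star_conj_diag_part_block[OF a Z(1,2) y(2)]
      star_block_eq_if_star_eq[OF H[OF diag_part_PX[OF A] star_diag_part_idem[OF A]], of "L y"] y(1)
    by simp
  from star_conj_diag_part_bound[OF b A y this V] show ?thesis
    using subset_cset_eq_LR(1)[OF Zc] by simp
qed

lemma star_separating:
  assumes a: "a \<in> PX X" and b: "b \<in> PX X"
    and H: "\<And>e. e \<in> PX X \<Longrightarrow> star X e e = e \<Longrightarrow>
      star X (star X (transpose_part a) e) a = star X (star X (transpose_part b) e) b"
    and Z: "Z \<in> a" "is_gline X Z"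
  shows "Z \<in> b"
proof -
  obtain y where y: "R y \<in> Z" "y \<in> X" using Z(2) unfolding is_gline_iff by blast
  obtain V where V: "V \<in> b" "R y \<in> V" using PX_block_exists[OF b, of "R y"] y(2) by auto
  have VZ: "is_gline X V" "V \<subseteq> Z" using star_separating_block_subset[OF a b H Z y(1) V] by auto
  have "Z \<subseteq> V" using star_separating_block_subset[OF b a H[symmetric] V(1) VZ(1) V(2) Z(1) y(1)] by auto
  then show ?thesis using VZ(2) V(1) by simp
qed

theorem star_fundamental: "fundamental (PX X) (star X)"
  by (rule fundamental_PXI[where m = "star X",
        OF star_transpose_inverse star_inverse_unique_line star_separating])

section \<open>The product \<open>\<circ>\<close>\<close>

lemma PX_LR_unique_left:
  assumes "P \<in> PX X" "L ` A \<union> R ` B \<in> P" "L ` A' \<union> R ` B' \<in> P" "t \<in> A" "t \<in> A'"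
  shows "A = A' \<and> B = B'"
proof -
  have "L ` A \<union> R ` B = L ` A' \<union> R ` B'"
    by (rule PX_block_unique[OF assms(1,2,3), of "L t"]) (use assms(4,5) in auto)
  then show ?thesis by (simp only: LR_eq_iff)
qed

lemma PX_LR_unique_right:
  assumes "P \<in> PX X" "L ` A \<union> R ` B \<in> P" "L ` A' \<union> R ` B' \<in> P" "t \<in> B" "t \<in> B'"
  shows "A = A' \<and> B = B'"
proof -
  have "L ` A \<union> R ` B = L ` A' \<union> R ` B'"
    by (rule PX_block_unique[OF assms(1,2,3), of "R t"]) (use assms(4,5) in auto)
  then show ?thesis by (simp only: LR_eq_iff)
qed

lemma circ_linesE:
  assumes "Z \<in> circ_lines X \<alpha> \<beta>"
  obtains A B D where "Z = L ` A \<union> R ` D" "L ` A \<union> R ` B \<in> \<alpha>" "is_gline X (L ` A \<union> R ` B)"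
    "L ` B \<union> R ` D \<in> \<beta>" "is_gline X (L ` B \<union> R ` D)"
  using assms unfolding circ_lines_def by blast

lemma circ_linesI:
  assumes "L ` A \<union> R ` B \<in> \<alpha>" "is_gline X (L ` A \<union> R ` B)"
    "L ` B \<union> R ` D \<in> \<beta>" "is_gline X (L ` B \<union> R ` D)"
  shows "L ` A \<union> R ` D \<in> circ_lines X \<alpha> \<beta>"
  using assms unfolding circ_lines_def by blast

lemma is_gline_circ_lines: "Z \<in> circ_lines X \<alpha> \<beta> \<Longrightarrow> is_gline X Z"
  by (erule circ_linesE) (auto simp: is_gline_LR)

lemma circ_line_iff: "Z \<in> circ X \<alpha> \<beta> \<and> is_gline X Z \<longleftrightarrow> Z \<in> circ_lines X \<alpha> \<beta>"
  unfolding circ_def using is_gline_circ_lines is_gline_not_singleton by fastforce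

lemma circ_PX:
  assumes a: "\<alpha> \<in> PX X" and b: "\<beta> \<in> PX X"
  shows "circ X \<alpha> \<beta> \<in> PX X"
  unfolding circ_def
proof (rule lines_points_PX)
  fix Z assume "Z \<in> circ_lines X \<alpha> \<beta>"
  then show "is_gline X Z" by (rule is_gline_circ_lines)
next
  fix Z assume "Z \<in> circ_lines X \<alpha> \<beta>"
  then obtain A B D where Z: "Z = L ` A \<union> R ` D" "L ` A \<union> R ` B \<in> \<alpha>" "L ` B \<union> R ` D \<in> \<beta>"
    by (rule circ_linesE)
  then show "Z \<subseteq> cset X" using PX_block_subset[OF a Z(2)] PX_block_subset[OF b Z(3)] by blast
next
  fix Z Z' assume Z: "Z \<in> circ_lines X \<alpha> \<beta>" and Z': "Z' \<in> circ_lines X \<alpha> \<beta>" and "Z \<inter> Z' \<noteq> {}"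
  obtain A B D where h: "Z = L ` A \<union> R ` D" "L ` A \<union> R ` B \<in> \<alpha>" "is_gline X (L ` A \<union> R ` B)"
    "L ` B \<union> R ` D \<in> \<beta>" "is_gline X (L ` B \<union> R ` D)" using Z by (rule circ_linesE)
  obtain A' B' D' where h': "Z' = L ` A' \<union> R ` D'" "L ` A' \<union> R ` B' \<in> \<alpha>"
    "L ` B' \<union> R ` D' \<in> \<beta>" using Z' by (rule circ_linesE)
  obtain s where s: "s \<in> B" using h(3) unfolding is_gline_LR by blast
  obtain v where v: "v \<in> Z" "v \<in> Z'" using \<open>Z \<inter> Z' \<noteq> {}\<close> by blast
  then consider t where "t \<in> A" "t \<in> A'" | t where "t \<in> D" "t \<in> D'"
    using h(1) h'(1) by blast
  then show "Z = Z'"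
  proof cases
    case 1
    then have "A = A'" "B = B'" using PX_LR_unique_left[OF a h(2) h'(2)] by auto
    moreover from this have "D = D'" using PX_LR_unique_left[OF b h(4) h'(3) s] s by auto
    ultimately show ?thesis using h(1) h'(1) by simp
  next
    case 2
    then have "B = B'" "D = D'" using PX_LR_unique_right[OF b h(4) h'(3)] by auto
    moreover from this have "A = A'" using PX_LR_unique_right[OF a h(2) h'(2) s] s by auto
    ultimately show ?thesis using h(1) h'(1) by simp
  qed
qed

lemma circ_transpose_inverse:
  assumes a: "a \<in> PX X"
  shows "circ X (circ X a (transpose_part a)) a = a"
proof (rule PX_eqI_lines[OF circ_PX[OF circ_PX[OF a transpose_part_PX[OF a]] a] a])
  fix Z assume "Z \<in> circ X (circ X a (transpose_part a)) a" "is_gline X Z"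
  then have "Z \<in> circ_lines X (circ X a (transpose_part a)) a" using circ_line_iff by blast
  then obtain A0 B0 D0 where h: "Z = L ` A0 \<union> R ` D0" "L ` A0 \<union> R ` B0 \<in> circ X a (transpose_part a)"
    "is_gline X (L ` A0 \<union> R ` B0)" "L ` B0 \<union> R ` D0 \<in> a" by (rule circ_linesE)
  have "L ` A0 \<union> R ` B0 \<in> circ_lines X a (transpose_part a)" using h(2,3) circ_line_iff by blast
  then obtain A1 B1 D1 where h1: "L ` A0 \<union> R ` B0 = L ` A1 \<union> R ` D1" "L ` A1 \<union> R ` B1 \<in> a"
    "is_gline X (L ` A1 \<union> R ` B1)" "L ` B1 \<union> R ` D1 \<in> transpose_part a" by (rule circ_linesE)
  have "L ` D1 \<union> R ` B1 \<in> a" using h1(4) by (simp add: mem_transpose_part swap_image_LR)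
  moreover obtain s where "s \<in> B1" using h1(3) unfolding is_gline_LR by blast
  ultimately have "A1 = D1" using PX_LR_unique_right[OF a h1(2)] by blast
  then show "Z \<in> a" using h(1,4) h1(1) by (simp add: LR_eq_iff)
next
  fix Z assume Z: "Z \<in> a" "is_gline X Z"
  obtain A B where AB: "Z = L ` A \<union> R ` B" "A \<noteq> {}" "B \<noteq> {}" "A \<subseteq> X" "B \<subseteq> X"
    using PX_lineE[OF a Z] .
  have lines: "is_gline X (L ` A \<union> R ` B)" "is_gline X (L ` B \<union> R ` A)" "is_gline X (L ` A \<union> R ` A)"
    using AB unfolding is_gline_LR by auto
  have "L ` B \<union> R ` A \<in> transpose_part a" using Z AB by (simp add: mem_transpose_part swap_image_LR)
  then have "L ` A \<union> R ` A \<in> circ_lines X a (transpose_part a)"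
    using circ_linesI Z AB lines by metis
  then have "L ` A \<union> R ` A \<in> circ X a (transpose_part a)" using circ_line_iff by blast
  then have "L ` A \<union> R ` B \<in> circ_lines X (circ X a (transpose_part a)) a"
    using circ_linesI Z AB lines by metis
  then show "Z \<in> circ X (circ X a (transpose_part a)) a" using circ_line_iff AB(1) by blast
qed

lemma circ_inverse_unique_line:
  assumes a: "a \<in> PX X" and eq: "circ X (circ X a b) a = a" and Z: "Z \<in> a" "is_gline X Z"
  shows "swap ` Z \<in> b"
proof -
  obtain A B where AB: "Z = L ` A \<union> R ` B" "A \<noteq> {}" "B \<noteq> {}"
    using PX_lineE[OF a Z] by metis
  have "Z \<in> circ_lines X (circ X a b) a" using Z eq circ_line_iff by metis
  then obtain A0 B0 D0 where h: "Z = L ` A0 \<union> R ` D0" "L ` A0 \<union> R ` B0 \<in> circ X a b"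
    "is_gline X (L ` A0 \<union> R ` B0)" "L ` B0 \<union> R ` D0 \<in> a" by (rule circ_linesE)
  have e0: "A0 = A" "D0 = B" using h(1) AB(1) by (simp_all add: LR_eq_iff)
  have "L ` A0 \<union> R ` B0 \<in> circ_lines X a b" using h(2,3) circ_line_iff by blast
  then obtain A1 B1 D1 where h1: "L ` A0 \<union> R ` B0 = L ` A1 \<union> R ` D1" "L ` A1 \<union> R ` B1 \<in> a"
    "L ` B1 \<union> R ` D1 \<in> b" by (rule circ_linesE)
  have e1: "A1 = A" "D1 = B0" using h1(1) e0 by (simp_all add: LR_eq_iff)
  obtain t s where "t \<in> A" "s \<in> B" using AB by blast
  then have "B1 = B" "B0 = A"
    using PX_LR_unique_left[OF a h1(2), of A B t] PX_LR_unique_right[OF a h(4), of A B s] Z(1) AB e0 e1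
    by auto
  then show ?thesis using h1(3) e1 AB(1) by (simp add: swap_image_LR)
qed

lemma circ_diag_part_idem:
  assumes A: "A \<subseteq> X" "A \<noteq> {}"
  shows "circ X (diag_part X A) (diag_part X A) = diag_part X A"
proof (rule PX_eqI_lines[OF circ_PX[OF diag_part_PX[OF A] diag_part_PX[OF A]] diag_part_PX[OF A]])
  fix Z assume "Z \<in> circ X (diag_part X A) (diag_part X A)" "is_gline X Z"
  then have "Z \<in> circ_lines X (diag_part X A) (diag_part X A)" using circ_line_iff by blast
  then obtain A0 B0 D0 where h: "Z = L ` A0 \<union> R ` D0"
    "L ` A0 \<union> R ` B0 \<in> diag_part X A" "is_gline X (L ` A0 \<union> R ` B0)"
    "L ` B0 \<union> R ` D0 \<in> diag_part X A" "is_gline X (L ` B0 \<union> R ` D0)"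
    by (rule circ_linesE)
  have "A0 = A" "D0 = A"
    using diag_part_line_unique[OF h(2,3)] diag_part_line_unique[OF h(4,5)] by (simp_all add: LR_eq_iff)
  then show "Z \<in> diag_part X A" using h(1) diag_part_line by simp
next
  fix Z assume "Z \<in> diag_part X A" "is_gline X Z"
  then have Z: "Z = L ` A \<union> R ` A" using diag_part_line_unique by blast
  have "is_gline X (L ` A \<union> R ` A)" using A unfolding is_gline_LR by auto
  then have "L ` A \<union> R ` A \<in> circ_lines X (diag_part X A) (diag_part X A)"
    using circ_linesI diag_part_line by metis
  then show "Z \<in> circ X (diag_part X A) (diag_part X A)" using circ_line_iff Z by blast
qed

lemma circ_separating:
  assumes a: "a \<in> PX X" and b: "b \<in> PX X"
    and H: "\<And>e. e \<in> PX X \<Longrightarrow> circ X e e = e \<Longrightarrow>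
      circ X (circ X (transpose_part a) e) a = circ X (circ X (transpose_part b) e) b"
    and Z: "Z \<in> a" "is_gline X Z"
  shows "Z \<in> b"
proof -
  obtain A B where AB: "Z = L ` A \<union> R ` B" "A \<noteq> {}" "B \<noteq> {}" "A \<subseteq> X" "B \<subseteq> X"
    using PX_lineE[OF a Z] .
  let ?e = "diag_part X A"
  have lines: "is_gline X (L ` A \<union> R ` B)" "is_gline X (L ` B \<union> R ` A)"
    "is_gline X (L ` A \<union> R ` A)" "is_gline X (L ` B \<union> R ` B)"
    using AB unfolding is_gline_LR by auto
  have "L ` B \<union> R ` A \<in> transpose_part a" using Z AB by (simp add: mem_transpose_part swap_image_LR)
  then have "L ` B \<union> R ` A \<in> circ_lines X (transpose_part a) ?e"
    using circ_linesI diag_part_line lines by metis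
  then have "L ` B \<union> R ` A \<in> circ X (transpose_part a) ?e" using circ_line_iff by blast
  then have "L ` B \<union> R ` B \<in> circ_lines X (circ X (transpose_part a) ?e) a"
    using circ_linesI Z(1) AB(1) lines by metis
  then have "L ` B \<union> R ` B \<in> circ X (circ X (transpose_part b) ?e) b"
    using H[OF diag_part_PX[OF AB(4,2)] circ_diag_part_idem[OF AB(4,2)]] circ_line_iff by metis
  then have "L ` B \<union> R ` B \<in> circ_lines X (circ X (transpose_part b) ?e) b"
    using circ_line_iff lines(4) by blast
  then obtain A0 B0 D0 where h: "L ` B \<union> R ` B = L ` A0 \<union> R ` D0"
    "L ` A0 \<union> R ` B0 \<in> circ X (transpose_part b) ?e" "is_gline X (L ` A0 \<union> R ` B0)"
    "L ` B0 \<union> R ` D0 \<in> b" by (rule circ_linesE)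
  have "L ` A0 \<union> R ` B0 \<in> circ_lines X (transpose_part b) ?e" using h(2,3) circ_line_iff by blast
  then obtain A1 B1 D1 where h1: "L ` A0 \<union> R ` B0 = L ` A1 \<union> R ` D1"
    "L ` B1 \<union> R ` D1 \<in> ?e" "is_gline X (L ` B1 \<union> R ` D1)" by (rule circ_linesE)
  have "D1 = A" using diag_part_line_unique[OF h1(2,3)] by (simp add: LR_eq_iff)
  moreover have "B0 = D1" "D0 = B" using h1(1) h(1) LR_eq_iff by metis+
  ultimately show ?thesis using h(4) AB(1) by simp
qed

theorem circ_fundamental: "fundamental (PX X) (circ X)"
proof (rule fundamental_PXI)
  show "circ X (circ X a (transpose_part a)) a = a" if "a \<in> PX X" for a
    using circ_transpose_inverse[OF that] .
  show "swap ` Z \<in> b" if "a \<in> PX X" "circ X (circ X a b) a = a" "Z \<in> a" "is_gline X Z" for a b Z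
    using circ_inverse_unique_line[OF that] .
qed (rule circ_separating)

theorem mainTheorem3:
  fixes X :: "'a set"
  assumes "\<exists>x\<in>X. \<exists>y\<in>X. x \<noteq> y"
  shows "fundamental (PX X) (star X) \<and> fundamental (PX X) (circ X)"
  using star_fundamental circ_fundamental by blast

end
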